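(* Let $L_1=\langle\mathbf{A}_1,D_1\rangle$ and $L_2=\langle\mathbf{A}_2,D_2\rangle$ be two matrix logics over the same propositional signature such that $\mathbf{A}_2$ is a subalgebra of $\mathbf{A}_1$ and $D_2=D_1\cap A_2$. Suppose there is a formula $\circ'(p)$ depending on a single propositional variable $p$ such that, for every valuation $\vartheta$ over $L_1$ and every formula $\alpha$, $\vartheta(\circ'\alpha)\in D_1$ iff $\vartheta(\alpha)\in A_2$. Then for every set of formulas $\Gamma$ and formula $\alpha$: $\circ'(Var(\Gamma\cup\{\alpha\})),\Gamma\vdash_{L_1}\alpha$ iff $\Gamma\vdash_{L_2}\alpha$, where $\circ'(X)=\{\circ'(p): p\in X\}$ for a set $X$ of propositional variables.
   Context: A matrix logic $\langle\mathbf{A},D\rangle$ consists of an algebra $\mathbf{A}$ of the signature and a set $D\subseteq A$ of designated values; a valuation is a homomorphism from the formula algebra into $\mathbf{A}$, and $\Gamma\vdash\alpha$ iff every valuation $\vartheta$ with $\vartheta[\Gamma]\subseteq D$ has $\vartheta(\alpha)\in D$. $Var(\Delta)$ is the set of propositional variables occurring in the formulas of $\Delta$; $\circ'\alpha$ denotes the result of substituting $\alpha$ for $p$ in $\circ'(p)$. *)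

theory Defs
  imports Main
begin

datatype 'c fm = Var nat | Op 'c "'c fm list"

fun wf_fm :: "('c \<Rightarrow> nat) \<Rightarrow> 'c fm \<Rightarrow> bool" where
  "wf_fm ar (Var p) = True"
| "wf_fm ar (Op c as) = (length as = ar c \<and> (\<forall>a\<in>set as. wf_fm ar a))"

fun fvars :: "'c fm \<Rightarrow> nat set" where
  "fvars (Var p) = {p}"
| "fvars (Op c as) = (\<Union>a\<in>set as. fvars a)"

fun subst :: "(nat \<Rightarrow> 'c fm) \<Rightarrow> 'c fm \<Rightarrow> 'c fm" where
  "subst s (Var p) = s p"
| "subst s (Op c as) = Op c (map (subst s) as)"

fun eval :: "('c \<Rightarrow> 'a list \<Rightarrow> 'a) \<Rightarrow> (nat \<Rightarrow> 'a) \<Rightarrow> 'c fm \<Rightarrow> 'a" where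
  "eval f v (Var p) = v p"
| "eval f v (Op c as) = f c (map (eval f v) as)"

text \<open>The set A is closed under the operations f (so (A, f restricted to A) is an algebra).\<close>
definition closed_ops :: "('c \<Rightarrow> nat) \<Rightarrow> ('c \<Rightarrow> 'a list \<Rightarrow> 'a) \<Rightarrow> 'a set \<Rightarrow> bool" where
  "closed_ops ar f A \<longleftrightarrow> (\<forall>c xs. length xs = ar c \<longrightarrow> set xs \<subseteq> A \<longrightarrow> f c xs \<in> A)"

definition mcons :: "('c \<Rightarrow> 'a list \<Rightarrow> 'a) \<Rightarrow> 'a set \<Rightarrow> 'a set \<Rightarrow> 'c fm set \<Rightarrow> 'c fm \<Rightarrow> bool" where
  "mcons f A D \<Gamma> \<phi> \<longleftrightarrow>
     (\<forall>v. range v \<subseteq> A \<longrightarrow> (\<forall>\<gamma>\<in>\<Gamma>. eval f v \<gamma> \<in> D) \<longrightarrow> eval f v \<phi> \<in> D)"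

definition inst :: "'c fm \<Rightarrow> nat \<Rightarrow> 'c fm \<Rightarrow> 'c fm" where
  "inst circ p \<alpha> = subst (\<lambda>q. if q = p then \<alpha> else Var q) circ"

end

(* Under a valuation into A1, the premises circ'(q) hold exactly when the relevant
   variables q take values in A2. As A2 is closed under the operations, every relevant
   formula then evaluates into A2, where D1 and D2 agree; the irrelevant variables can
   be reassigned to values in A2 without changing anything. *)
theory Submission
  imports Defs
begin

lemma eval_cong_fvars: "\<forall>q\<in>fvars \<phi>. v q = w q \<Longrightarrow> eval f v \<phi> = eval f w \<phi>"
  by (induction \<phi>) (auto cong: map_cong)

lemma eval_in_closed:
  assumes "closed_ops ar f B" and "wf_fm ar \<phi>" and "v ` fvars \<phi> \<subseteq> B"
  shows "eval f v \<phi> \<in> B"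
  using assms(2,3)
proof (induction \<phi>)
  case (Var q)
  then show ?case by simp
next
  case (Op c as)
  then have "set (map (eval f v) as) \<subseteq> B" by auto
  with Op.prems assms(1) show ?case by (simp add: closed_ops_def)
qed

lemma mcons_on_fvars:
  assumes cons: "mcons f A D \<Gamma> \<phi>" and "A \<noteq> {}"
    and v: "v ` (\<Union>\<psi>\<in>\<Gamma> \<union> {\<phi>}. fvars \<psi>) \<subseteq> A" and \<Gamma>: "\<forall>\<gamma>\<in>\<Gamma>. eval f v \<gamma> \<in> D"
  shows "eval f v \<phi> \<in> D"
proof -
  obtain a where a: "a \<in> A" using \<open>A \<noteq> {}\<close> by blast
  define w where "w q = (if q \<in> (\<Union>\<psi>\<in>\<Gamma> \<union> {\<phi>}. fvars \<psi>) then v q else a)" for q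
  have w_v: "eval f w \<psi> = eval f v \<psi>" if "\<psi> \<in> \<Gamma> \<union> {\<phi>}" for \<psi>
    by (rule eval_cong_fvars) (use that in \<open>auto simp: w_def\<close>)
  have "range w \<subseteq> A" using v a by (auto simp: w_def)
  moreover have "\<forall>\<gamma>\<in>\<Gamma>. eval f w \<gamma> \<in> D" using \<Gamma> w_v by simp
  ultimately have "eval f w \<phi> \<in> D" using cons by (simp add: mcons_def)
  with w_v show ?thesis by simp
qed

lemma mcons_submatrix_if_mcons:
  assumes "A2 \<subseteq> A1" and "closed_ops ar f A2" and "wf_fm ar \<alpha>"
    and \<Pi>: "\<And>v \<pi>. range v \<subseteq> A2 \<Longrightarrow> \<pi> \<in> \<Pi> \<Longrightarrow> eval f v \<pi> \<in> D1"
    and cons1: "mcons f A1 D1 (\<Pi> \<union> \<Gamma>) \<alpha>"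
  shows "mcons f A2 (D1 \<inter> A2) \<Gamma> \<alpha>"
  unfolding mcons_def
proof (intro allI impI)
  fix v assume v: "range v \<subseteq> A2" and \<Gamma>: "\<forall>\<gamma>\<in>\<Gamma>. eval f v \<gamma> \<in> D1 \<inter> A2"
  have v1: "range v \<subseteq> A1" using v \<open>A2 \<subseteq> A1\<close> by blast
  have "\<forall>\<gamma>\<in>\<Pi> \<union> \<Gamma>. eval f v \<gamma> \<in> D1" using \<Pi>[OF v] \<Gamma> by blast
  with cons1 v1 have "eval f v \<alpha> \<in> D1" by (simp add: mcons_def)
  moreover have "eval f v \<alpha> \<in> A2" using eval_in_closed[OF assms(2,3)] v by blast
  ultimately show "eval f v \<alpha> \<in> D1 \<inter> A2" by blast
qed

lemma mcons_if_mcons_submatrix: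
  assumes alg2: "closed_ops ar f A2" and wf_\<Gamma>: "\<forall>\<gamma>\<in>\<Gamma>. wf_fm ar \<gamma>" and wf_\<alpha>: "wf_fm ar \<alpha>"
    and \<Pi>: "\<And>v. range v \<subseteq> A1 \<Longrightarrow> \<forall>\<pi>\<in>\<Pi>. eval f v \<pi> \<in> D1 \<Longrightarrow>
        v ` (\<Union>\<phi>\<in>\<Gamma> \<union> {\<alpha>}. fvars \<phi>) \<subseteq> A2"
    and cons2: "mcons f A2 (D1 \<inter> A2) \<Gamma> \<alpha>"
  shows "mcons f A1 D1 (\<Pi> \<union> \<Gamma>) \<alpha>"
  unfolding mcons_def
proof (intro allI impI)
  fix v assume v: "range v \<subseteq> A1" and prems: "\<forall>\<gamma>\<in>\<Pi> \<union> \<Gamma>. eval f v \<gamma> \<in> D1"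
  have vars_A2: "v ` (\<Union>\<phi>\<in>\<Gamma> \<union> {\<alpha>}. fvars \<phi>) \<subseteq> A2" using \<Pi>[OF v] prems by blast
  then have "eval f v \<alpha> \<in> A2" using eval_in_closed[OF alg2 wf_\<alpha>] by blast
  then have "A2 \<noteq> {}" by blast
  moreover have "eval f v \<gamma> \<in> D1 \<inter> A2" if "\<gamma> \<in> \<Gamma>" for \<gamma>
  proof -
    have "v ` fvars \<gamma> \<subseteq> A2" using vars_A2 that by blast
    then have "eval f v \<gamma> \<in> A2" using eval_in_closed[OF alg2] wf_\<Gamma> that by blast
    then show ?thesis using prems that by blast
  qed
  ultimately have "eval f v \<alpha> \<in> D1 \<inter> A2" using mcons_on_fvars[OF cons2 _ vars_A2] by blast
  then show "eval f v \<alpha> \<in> D1" by blast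
qed

theorem theorem19:
  fixes ar :: "'c \<Rightarrow> nat" and f :: "'c \<Rightarrow> 'a list \<Rightarrow> 'a"
    and A1 A2 D1 D2 :: "'a set" and circ :: "'c fm" and p :: nat
  assumes alg1: "closed_ops ar f A1"
    and sub: "A2 \<subseteq> A1" and alg2: "closed_ops ar f A2"
    and D1: "D1 \<subseteq> A1"
    and D2: "D2 = D1 \<inter> A2"
    and wf_circ: "wf_fm ar circ" and vars_circ: "fvars circ = {p}"
    and circ_prop: "\<And>v \<alpha>. range v \<subseteq> A1 \<Longrightarrow> wf_fm ar \<alpha> \<Longrightarrow>
        (eval f v (inst circ p \<alpha>) \<in> D1 \<longleftrightarrow> eval f v \<alpha> \<in> A2)"
    and wf_Gamma: "\<forall>\<gamma>\<in>\<Gamma>. wf_fm ar \<gamma>" and wf_alpha: "wf_fm ar \<alpha>"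
  shows "mcons f A1 D1 ((\<lambda>q. inst circ p (Var q)) ` (\<Union>\<phi>\<in>\<Gamma> \<union> {\<alpha>}. fvars \<phi>) \<union> \<Gamma>) \<alpha>
         \<longleftrightarrow> mcons f A2 D2 \<Gamma> \<alpha>"
proof -
  let ?circ_vars = "(\<lambda>q. inst circ p (Var q)) ` (\<Union>\<phi>\<in>\<Gamma> \<union> {\<alpha>}. fvars \<phi>)"
  have circ_Var: "eval f v (inst circ p (Var q)) \<in> D1 \<longleftrightarrow> v q \<in> A2" if "range v \<subseteq> A1" for v q
    using circ_prop[OF that, of "Var q"] by simp
  have "mcons f A1 D1 (?circ_vars \<union> \<Gamma>) \<alpha> \<Longrightarrow> mcons f A2 (D1 \<inter> A2) \<Gamma> \<alpha>"
    by (rule mcons_submatrix_if_mcons[OF sub alg2 wf_alpha, where \<Pi> = ?circ_vars])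
      (use circ_Var sub in blast)+
  moreover have "mcons f A2 (D1 \<inter> A2) \<Gamma> \<alpha> \<Longrightarrow> mcons f A1 D1 (?circ_vars \<union> \<Gamma>) \<alpha>"
    by (rule mcons_if_mcons_submatrix[OF alg2 wf_Gamma wf_alpha, where \<Pi> = ?circ_vars])
      (use circ_Var in blast)+
  ultimately show ?thesis unfolding D2 by blast
qed

end
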